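(* Let $C_{\mathrm{SSD}}=\mathrm{SSD}(D(X),D(Y))$ be the output of the SSD algorithm applied to the full dictionary snapshots. Consider the P-SSD algorithm described in the context, executed over an arbitrary, possibly time-varying, sequence of digraphs. Then at each iteration $k\in\mathbb{N}_0$, $\mathcal{R}(C_{\mathrm{SSD}})\subseteq\mathcal{R}(C_k^i)$ for all $i\in\{1,\dots,M\}$.
   Context: Data setting: a map $T:\mathcal{M}\to\mathcal{M}$, $\mathcal{M}\subseteq\mathbb{R}^n$; a dictionary $D(x)=[d_1(x),\dots,d_{N_d}(x)]$ of real-valued functions on $\mathcal{M}$; data matrices $X,Y\in\mathbb{R}^{N\times n}$ whose $i$-th rows $x_i^T,y_i^T$ satisfy $y_i=T(x_i)$; $D(X)\in\mathbb{R}^{N\times N_d}$ is the matrix with rows $D(x_1),\dots,D(x_N)$ (similarly $D(Y)$). Assumption: $D(X)$ and $D(Y)$ have full column rank. There are $M$ agents; agent $i$ holds local dictionary snapshots $D(X_i),D(Y_i)$ (obtained from a subset of the snapshot pairs) such that the union over $i$ of the rows of $[D(X_i),D(Y_i)]$ equals the set of rows of $[D(X),D(Y)]$. There are signature matrices $D(X_s),D(Y_s)$ with full column rank such that the rows of $[D(X_s),D(Y_s)]$ are contained in the rows of $[D(X_i),D(Y_i)]$ for every $i$. SSD algorithm: given $A,B\in\mathbb{R}^{m\times q}$, set $A_1=A$, $B_1=B$, $C=I_q$, and iterate: let $[Z^A_j;Z^B_j]$ be a matrix whose columns form a basis of the null space of $[A_j,B_j]$ (with $Z^A_j$ having as many rows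 as $A_j$ has columns); if the null space is trivial return $0$; if the number of rows of $Z^A_j$ is at most its number of columns, return $C$; otherwise set $C\leftarrow CZ^A_j$, $A_{j+1}=A_jZ^A_j$, $B_{j+1}=B_jZ^A_j$. Its output is denoted $\mathrm{SSD}(A,B)$. P-SSD algorithm: at iteration $k\ge1$ the digraph $G_k$ is used; an edge $(j,i)\in E_k$ means $j$ is an in-neighbor of $i$, and $\mathcal{N}_{\mathrm{in}}^k(i)$ denotes the in-neighbors of $i$ in $G_k$. Each agent $i$ sets $C_0^i=I_{N_d}$, $\mathrm{flag}_0^i=0$, and for $k=1,2,\dots$: receives $C_{k-1}^j$ for $j\in\mathcal{N}_{\mathrm{in}}^k(i)$; sets $D_k^i=\mathrm{basis}\big(\bigcap_{j\in\{i\}\cup\mathcal{N}_{\mathrm{in}}^k(i)}\mathcal{R}(C_{k-1}^j)\big)$; sets $E_k^i=\mathrm{SSD}(D(X_i)D_k^i,D(Y_i)D_k^i)$; if the number of columns of $D_k^iE_k^i$ is strictly less than that of $C_{k-1}^i$, sets $C_k^i=D_k^iE_k^i$ and $\mathrm{flag}_k^i=0$; otherwise sets $C_k^i=C_{k-1}^i$ and $\mathrm{flag}_k^i=1$; then transmits $C_k^i$ to its out-neighbors. Here $\mathrm{basis}(\mathcal{A})$ returns a matrix whose columns form a basis of the subspace $\mathcal{A}$, and returns $0$ if $\mathcal{A}=\{0\}$; the matrix $0$ is regarded as having $0$ columns. $\mathcal{R}(\cdot)$ denotes range space. *)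

theory Defs
  imports "Jordan_Normal_Form.Matrix"
begin

definition mat_range :: "real mat \<Rightarrow> real vec set" where
  "mat_range Z = {Z *\<^sub>v x | x. x \<in> carrier_vec (dim_col Z)}"

definition full_column_rank :: "real mat \<Rightarrow> bool" where
  "full_column_rank Z \<longleftrightarrow>
     (\<forall>x \<in> carrier_vec (dim_col Z). Z *\<^sub>v x = 0\<^sub>v (dim_row Z) \<longrightarrow> x = 0\<^sub>v (dim_col Z))"

text \<open>The columns of Z form a basis of the subspace S.  For S = {0} this forces Z to
  have 0 columns (the convention that basis({0}) = 0 is a matrix with 0 columns).\<close>
definition col_basis :: "real mat \<Rightarrow> real vec set \<Rightarrow> bool" where
  "col_basis Z S \<longleftrightarrow> full_column_rank Z \<and> mat_range Z = S"

definition hcat :: "real mat \<Rightarrow> real mat \<Rightarrow> real mat" where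
  "hcat A B = mat (dim_row A) (dim_col A + dim_col B)
     (\<lambda>(r, c). if c < dim_col A then A $$ (r, c) else B $$ (r, c - dim_col A))"

definition null_space_pair :: "real mat \<Rightarrow> real mat \<Rightarrow> real vec set" where
  "null_space_pair A B =
     {v \<in> carrier_vec (dim_col A + dim_col B). hcat A B *\<^sub>v v = 0\<^sub>v (dim_row A)}"

definition upper_block :: "real mat \<Rightarrow> real mat \<Rightarrow> real mat" where
  "upper_block A Z = mat (dim_col A) (dim_col Z) (\<lambda>(r, c). Z $$ (r, c))"

text \<open>ssd_from A B C out: starting the SSD loop with current A_j = A, B_j = B and
  accumulated C, the algorithm can return out (for some choice of null-space bases).\<close>
inductive ssd_from :: "real mat \<Rightarrow> real mat \<Rightarrow> real mat \<Rightarrow> real mat \<Rightarrow> bool" where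
  ssd_trivial:
    "col_basis Z (null_space_pair A B) \<Longrightarrow> dim_col Z = 0 \<Longrightarrow>
     ssd_from A B C (0\<^sub>m (dim_row C) 0)"
| ssd_stop:
    "col_basis Z (null_space_pair A B) \<Longrightarrow> 0 < dim_col Z \<Longrightarrow> dim_col A \<le> dim_col Z \<Longrightarrow>
     ssd_from A B C C"
| ssd_step:
    "col_basis Z (null_space_pair A B) \<Longrightarrow> 0 < dim_col Z \<Longrightarrow> dim_col Z < dim_col A \<Longrightarrow>
     ssd_from (A * upper_block A Z) (B * upper_block A Z) (C * upper_block A Z) out \<Longrightarrow>
     ssd_from A B C out"

definition is_SSD :: "real mat \<Rightarrow> real mat \<Rightarrow> real mat \<Rightarrow> bool" where
  "is_SSD A B out \<longleftrightarrow> ssd_from A B (1\<^sub>m (dim_col A)) out"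

definition row_set :: "real mat \<Rightarrow> real vec set" where
  "row_set A = {row A r | r. r < dim_row A}"

text \<open>pssd_exec M Nd DXl DYl E C: C k i (k \<ge> 0, agent i < M) is a possible execution
  of P-SSD with local data DXl i, DYl i and digraph sequence E (E k = edge set of G_k,
  (j,i) \<in> E k meaning j is an in-neighbour of i), for some choice of bases.\<close>
definition pssd_exec ::
  "nat \<Rightarrow> nat \<Rightarrow> (nat \<Rightarrow> real mat) \<Rightarrow> (nat \<Rightarrow> real mat) \<Rightarrow> (nat \<Rightarrow> (nat \<times> nat) set)
   \<Rightarrow> (nat \<Rightarrow> nat \<Rightarrow> real mat) \<Rightarrow> bool" where
  "pssd_exec M Nd DXl DYl E C \<longleftrightarrow>
     (\<forall>i < M. C 0 i = 1\<^sub>m Nd) \<and>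
     (\<forall>k i. 1 \<le> k \<and> i < M \<longrightarrow>
        (\<exists>Dk Ek. dim_row Dk = Nd \<and>
           col_basis Dk (\<Inter>j \<in> insert i {j. (j, i) \<in> E k}. mat_range (C (k - 1) j)) \<and>
           is_SSD (DXl i * Dk) (DYl i * Dk) Ek \<and>
           C k i = (if dim_col (Dk * Ek) < dim_col (C (k - 1) i) then Dk * Ek
                    else C (k - 1) i)))"

end

theory Submission
  imports Defs "Jordan_Normal_Form.Determinant"
begin

text \<open>
  Let S be the range of C_SSD. An SSD step on (A, B) replaces the current subspace by the image
  of the upper block of a null-space basis of [A, B], and that block spans exactly the vectors
  that A maps into the range of B. When SSD stops, the upper block is injective (B has full
  column rank) and has at least as many columns as rows, hence it is onto; so D(X) S lies in
  D(Y) S. Conversely, SSD never discards a set W with A W contained in B W.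
  Every local data row is a row of [D(X), D(Y)], so D(X_i) S lies in D(Y_i) S for each agent,
  and by induction on k the set S lies in every range intersected to form D_k^i and survives
  the local SSD.
\<close>

subsection \<open>Ranges and full column rank\<close>

lemma mult_mat_vec_uminus:
  "dim_vec w = dim_col A \<Longrightarrow> A *\<^sub>v (- w) = - (A *\<^sub>v (w :: 'a :: comm_ring vec))"
  by (intro eq_vecI) (auto simp: scalar_prod_uminus_right)

lemma mult_mat_vec_zero: "A *\<^sub>v 0\<^sub>v (dim_col A) = (0\<^sub>v (dim_row A) :: 'a :: semiring_0 vec)"
  by (intro eq_vecI) (auto simp: row_def)

lemma eq_uminus_if_add_eq_zero_vec:
  assumes "a + b = 0\<^sub>v n" "dim_vec a = n" "dim_vec b = n"
  shows "a = - (b :: 'a :: group_add vec)"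
proof (rule eq_vecI)
  fix i assume "i < dim_vec (- b)"
  then have "(a + b) $ i = 0"
    using assms by simp
  then show "a $ i = (- b) $ i"
    using \<open>i < dim_vec (- b)\<close> assms(3) by (simp add: eq_neg_iff_add_eq_0)
qed (use assms in simp)

lemma vec_first_append: "v \<in> carrier_vec n \<Longrightarrow> vec_first (v @\<^sub>v w) n = v"
  by (intro eq_vecI) (auto simp: vec_first_def)

lemma mat_range_image: "mat_range Z = (*\<^sub>v) Z ` carrier_vec (dim_col Z)"
  unfolding mat_range_def by blast

lemma mat_rangeI: "x \<in> carrier_vec (dim_col Z) \<Longrightarrow> Z *\<^sub>v x \<in> mat_range Z"
  unfolding mat_range_image by blast

lemma mat_range_carrier: "mat_range Z \<subseteq> carrier_vec (dim_row Z)"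
  unfolding mat_range_image by (auto intro: carrier_vecI)

lemma mat_range_one_mat [simp]: "mat_range (1\<^sub>m n) = carrier_vec n"
proof -
  have "(*\<^sub>v) (1\<^sub>m n) ` carrier_vec n = id ` (carrier_vec n :: real vec set)"
    by (rule image_cong) auto
  then show ?thesis
    unfolding mat_range_image by simp
qed

lemma mat_range_dim_col_0:
  assumes "dim_col Z = 0"
  shows "mat_range Z = {0\<^sub>v (dim_row Z)}"
proof -
  have "(*\<^sub>v) Z ` carrier_vec 0 = (\<lambda>_. 0\<^sub>v (dim_row Z)) ` (carrier_vec 0 :: real vec set)"
  proof (rule image_cong)
    show "Z *\<^sub>v x = 0\<^sub>v (dim_row Z)" if "x \<in> carrier_vec 0" for x
      using assms carrier_vecD[OF that] by (intro eq_vecI) (simp_all add: scalar_prod_def)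
  qed simp
  then show ?thesis
    unfolding mat_range_image assms using image_constant[OF zero_carrier_vec] by simp
qed

lemma image_mult_mat_vec_assoc:
  assumes "A \<in> carrier_mat n m" "U \<in> carrier_mat m k" "W \<subseteq> carrier_vec k"
  shows "(*\<^sub>v) (A * U) ` W = (*\<^sub>v) A ` (*\<^sub>v) U ` W"
  unfolding image_image using assms by (intro image_cong) (auto intro: assoc_mult_mat_vec)

lemma mat_range_mult:
  assumes "A \<in> carrier_mat n m" "U \<in> carrier_mat m k"
  shows "mat_range (A * U) = (*\<^sub>v) A ` mat_range U"
  using image_mult_mat_vec_assoc[OF assms order_refl] assms unfolding mat_range_image by simp

lemma image_preimage_mat_range:
  assumes "S \<subseteq> mat_range D"
  shows "(*\<^sub>v) D ` {u \<in> carrier_vec (dim_col D). D *\<^sub>v u \<in> S} = S"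
  using assms unfolding mat_range_image by auto

lemma full_column_rankD:
  "full_column_rank Z \<Longrightarrow> x \<in> carrier_vec (dim_col Z) \<Longrightarrow> Z *\<^sub>v x = 0\<^sub>v (dim_row Z) \<Longrightarrow>
    x = 0\<^sub>v (dim_col Z)"
  unfolding full_column_rank_def by blast

lemma full_column_rank_mult:
  assumes A: "full_column_rank A" and U: "full_column_rank U" and dim: "dim_row U = dim_col A"
  shows "full_column_rank (A * U)"
  unfolding full_column_rank_def
proof (intro ballI impI)
  fix x assume x: "x \<in> carrier_vec (dim_col (A * U))"
    and "A * U *\<^sub>v x = 0\<^sub>v (dim_row (A * U))"
  have U_carrier: "U \<in> carrier_mat (dim_col A) (dim_col U)"
    using dim by (intro carrier_matI) simp_all
  have x_carrier: "x \<in> carrier_vec (dim_col U)"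
    using x by simp
  have Ux: "A *\<^sub>v (U *\<^sub>v x) = 0\<^sub>v (dim_row A)"
    using \<open>A * U *\<^sub>v x = _\<close>
    unfolding assoc_mult_mat_vec[OF carrier_matI[OF refl refl] U_carrier x_carrier] by simp
  have "U *\<^sub>v x \<in> carrier_vec (dim_col A)"
    using dim by (intro carrier_vecI) simp
  then have "U *\<^sub>v x = 0\<^sub>v (dim_col A)"
    by (rule full_column_rankD[OF A _ Ux])
  then have "x = 0\<^sub>v (dim_col U)"
    using full_column_rankD[OF U x_carrier] dim by simp
  then show "x = 0\<^sub>v (dim_col (A * U))"
    by simp
qed

lemma right_inverse_if_full_column_rank:
  assumes V: "V \<in> carrier_mat n n" and rank: "full_column_rank V"
  obtains W where "W \<in> carrier_mat n n" and "V * W = 1\<^sub>m n"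
proof -
  have "det V \<noteq> 0"
    using det_0_iff_vec_prod_zero[OF V] full_column_rankD[OF rank] V by auto
  then show thesis
    using det_non_zero_imp_unit[OF V, of "()"] that unfolding Units_def ring_mat_def by auto
qed

text \<open>Padding U with zero rows gives a square matrix V of full column rank; a right inverse
  of V solves U v = x via V v = x @ 0.\<close>

lemma full_column_rank_mat_range_carrier:
  assumes rank: "full_column_rank U" and wide: "dim_row U \<le> dim_col U"
  shows "mat_range U = carrier_vec (dim_row U)"
proof
  show "mat_range U \<subseteq> carrier_vec (dim_row U)"
    by (rule mat_range_carrier)
  define q p where "q = dim_row U" and "p = dim_col U"
  define V where "V = U @\<^sub>r 0\<^sub>m (p - q) p"
  have U: "U \<in> carrier_mat q p"
    unfolding q_def p_def by (rule carrier_matI) simp_all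
  have V: "V \<in> carrier_mat p p"
    using carrier_append_rows[OF U zero_carrier_mat[of "p - q" p]] wide
    unfolding V_def q_def p_def by simp
  have U_mult: "U *\<^sub>v v = x"
    if v: "v \<in> carrier_vec p" and x: "x \<in> carrier_vec q"
      and Vv: "V *\<^sub>v v = x @\<^sub>v 0\<^sub>v (p - q)" for v x
  proof -
    have "0\<^sub>m (p - q) p *\<^sub>v v = 0\<^sub>v (p - q)"
      using v by (intro eq_vecI) auto
    then have "V *\<^sub>v v = (U *\<^sub>v v) @\<^sub>v 0\<^sub>v (p - q)"
      unfolding V_def mat_mult_append[OF U zero_carrier_mat v] by simp
    then show ?thesis
      using Vv append_vec_eq[OF x mult_mat_vec_carrier[OF U v]] by simp
  qed
  have "full_column_rank V"
    unfolding full_column_rank_def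
  proof (intro ballI impI)
    fix v assume v: "v \<in> carrier_vec (dim_col V)" and "V *\<^sub>v v = 0\<^sub>v (dim_row V)"
    moreover have "0\<^sub>v p = 0\<^sub>v q @\<^sub>v (0\<^sub>v (p - q) :: real vec)"
      using wide unfolding q_def p_def by (intro eq_vecI) auto
    ultimately have "U *\<^sub>v v = 0\<^sub>v q"
      using U_mult[OF _ zero_carrier_vec] V by simp
    then show "v = 0\<^sub>v (dim_col V)"
      using full_column_rankD[OF rank] v V unfolding q_def p_def by simp
  qed
  then obtain W where W: "W \<in> carrier_mat p p" "V * W = 1\<^sub>m p"
    using right_inverse_if_full_column_rank[OF V] by blast
  show "carrier_vec (dim_row U) \<subseteq> mat_range U"
  proof
    fix x :: "real vec" assume x: "x \<in> carrier_vec (dim_row U)"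
    define z where "z = x @\<^sub>v 0\<^sub>v (p - q)"
    have z: "z \<in> carrier_vec p"
      using x wide unfolding z_def q_def p_def by (intro carrier_vecI) auto
    have "V *\<^sub>v (W *\<^sub>v z) = z"
      using assoc_mult_mat_vec[OF V W(1) z] W(2) z by simp
    then have "U *\<^sub>v (W *\<^sub>v z) = x"
      using U_mult[OF mult_mat_vec_carrier[OF W(1) z]] x unfolding z_def q_def by simp
    then show "x \<in> mat_range U"
      using mat_rangeI[of "W *\<^sub>v z" U] mult_mat_vec_carrier[OF W(1) z] unfolding p_def by simp
  qed
qed

lemma dim_hcat [simp]:
  "dim_row (hcat A B) = dim_row A" "dim_col (hcat A B) = dim_col A + dim_col B"
  by (simp_all add: hcat_def)

lemma row_hcat: "r < dim_row A \<Longrightarrow> row (hcat A B) r = row A r @\<^sub>v row B r"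
  by (intro eq_vecI) (auto simp: hcat_def row_def)

lemma hcat_mult_append:
  assumes "dim_row B = dim_row A" "x \<in> carrier_vec (dim_col A)" "y \<in> carrier_vec (dim_col B)"
  shows "hcat A B *\<^sub>v (x @\<^sub>v y) = A *\<^sub>v x + B *\<^sub>v y"
proof (rule eq_vecI)
  fix r assume "r < dim_vec (A *\<^sub>v x + B *\<^sub>v y)"
  then have r: "r < dim_row A" using assms(1) by simp
  have "(hcat A B *\<^sub>v (x @\<^sub>v y)) $ r = (row A r @\<^sub>v row B r) \<bullet> (x @\<^sub>v y)"
    using r assms by (simp add: row_hcat)
  also have "\<dots> = row A r \<bullet> x + row B r \<bullet> y"
    using assms by (intro scalar_prod_append) auto
  finally show "(hcat A B *\<^sub>v (x @\<^sub>v y)) $ r = (A *\<^sub>v x + B *\<^sub>v y) $ r"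
    using r assms by simp
qed (use assms in simp)

lemma image_subset_if_row_set_hcat_subset:
  assumes rows: "row_set (hcat A' B') \<subseteq> row_set (hcat A B)"
    and A: "A \<in> carrier_mat n m" and B: "B \<in> carrier_mat n m"
    and A': "A' \<in> carrier_mat n' m" and B': "B' \<in> carrier_mat n' m"
    and S: "S \<subseteq> carrier_vec m" and inv: "(*\<^sub>v) A ` S \<subseteq> (*\<^sub>v) B ` S"
  shows "(*\<^sub>v) A' ` S \<subseteq> (*\<^sub>v) B' ` S"
proof -
  have local_eq: "A' *\<^sub>v s = B' *\<^sub>v s'"
    if "s \<in> carrier_vec m" "s' \<in> carrier_vec m" "A *\<^sub>v s = B *\<^sub>v s'" for s s'
  proof (rule eq_vecI)
    fix r assume "r < dim_vec (B' *\<^sub>v s')"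
    then have r: "r < n'" using B' by simp
    then have "row (hcat A' B') r \<in> row_set (hcat A B)"
      using rows A' unfolding row_set_def by auto
    then obtain r' where r': "r' < n" "row A' r @\<^sub>v row B' r = row A r' @\<^sub>v row B r'"
      using r A A' unfolding row_set_def by (auto simp: row_hcat)
    then have "row A' r = row A r'" "row B' r = row B r'"
      using r A A' by (simp_all add: append_vec_eq[of _ m])
    then have "(A' *\<^sub>v s) $ r = (A *\<^sub>v s) $ r'" "(B' *\<^sub>v s') $ r = (B *\<^sub>v s') $ r'"
      using r r'(1) A B A' B' by simp_all
    then show "(A' *\<^sub>v s) $ r = (B' *\<^sub>v s') $ r"
      using that(3) by simp
  qed (use A' B' in simp)
  show ?thesis
  proof (rule image_subsetI)
    fix s assume s: "s \<in> S"
    then obtain s' where "s' \<in> S" "A *\<^sub>v s = B *\<^sub>v s'"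
      using inv by blast
    then show "A' *\<^sub>v s \<in> (*\<^sub>v) B' ` S"
      using local_eq s S by blast
  qed
qed

subsection \<open>Bases of the null space of [A, B] and their upper blocks\<close>

lemma col_basis_null_space_dim_row:
  assumes "col_basis Z (null_space_pair A B)"
  shows "dim_row Z = dim_col A + dim_col B"
proof -
  have "Z *\<^sub>v 0\<^sub>v (dim_col Z) \<in> null_space_pair A B"
    using assms mat_rangeI[of "0\<^sub>v (dim_col Z)" Z] unfolding col_basis_def by simp
  then show ?thesis
    unfolding null_space_pair_def by (auto dest: carrier_vecD)
qed

lemma dim_upper_block [simp]:
  "dim_row (upper_block A Z) = dim_col A" "dim_col (upper_block A Z) = dim_col Z"
  by (simp_all add: upper_block_def)

lemma upper_block_mult_vec:
  assumes "dim_col A \<le> dim_row Z"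
  shows "upper_block A Z *\<^sub>v u = vec_first (Z *\<^sub>v u) (dim_col A)"
proof (rule eq_vecI)
  fix r assume "r < dim_vec (vec_first (Z *\<^sub>v u) (dim_col A))"
  then have r: "r < dim_col A" by simp
  have "row (upper_block A Z) r = row Z r"
    using r assms by (intro eq_vecI) (auto simp: upper_block_def)
  then show "(upper_block A Z *\<^sub>v u) $ r = vec_first (Z *\<^sub>v u) (dim_col A) $ r"
    using r assms by (simp add: vec_first_def)
qed simp

lemma upper_block_mult_vec_carrier: "upper_block A Z *\<^sub>v u \<in> carrier_vec (dim_col A)"
  by (intro carrier_vecI) simp

lemma col_basis_null_space_mult_vec:
  assumes Z: "col_basis Z (null_space_pair A B)" and dim: "dim_row B = dim_row A"
    and u: "u \<in> carrier_vec (dim_col Z)"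
  obtains y where "y \<in> carrier_vec (dim_col B)"
    and "Z *\<^sub>v u = (upper_block A Z *\<^sub>v u) @\<^sub>v y"
    and "A *\<^sub>v (upper_block A Z *\<^sub>v u) + B *\<^sub>v y = 0\<^sub>v (dim_row A)"
proof
  define y where "y = vec_last (Z *\<^sub>v u) (dim_col B)"
  have Z_rows: "dim_row Z = dim_col A + dim_col B"
    by (rule col_basis_null_space_dim_row[OF Z])
  have "Z *\<^sub>v u \<in> carrier_vec (dim_col A + dim_col B)"
    using Z_rows by (intro carrier_vecI) simp
  then show split: "Z *\<^sub>v u = (upper_block A Z *\<^sub>v u) @\<^sub>v y"
    unfolding y_def using Z_rows by (simp add: upper_block_mult_vec)
  show y_carrier: "y \<in> carrier_vec (dim_col B)"
    unfolding y_def by simp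
  have "Z *\<^sub>v u \<in> null_space_pair A B"
    using Z mat_rangeI[OF u] unfolding col_basis_def by simp
  then show "A *\<^sub>v (upper_block A Z *\<^sub>v u) + B *\<^sub>v y = 0\<^sub>v (dim_row A)"
    unfolding null_space_pair_def split
    using hcat_mult_append[OF dim _ y_carrier, of "upper_block A Z *\<^sub>v u"]
    by (simp add: upper_block_mult_vec_carrier)
qed

lemma mat_range_upper_block:
  assumes Z: "col_basis Z (null_space_pair A B)" and dim: "dim_row B = dim_row A"
  shows "mat_range (upper_block A Z) = {w \<in> carrier_vec (dim_col A). A *\<^sub>v w \<in> mat_range B}"
proof (intro equalityI subsetI)
  fix w assume "w \<in> mat_range (upper_block A Z)"
  then obtain u where u: "u \<in> carrier_vec (dim_col Z)" and w: "w = upper_block A Z *\<^sub>v u"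
    unfolding mat_range_image by auto
  obtain y where y: "y \<in> carrier_vec (dim_col B)" and "A *\<^sub>v w + B *\<^sub>v y = 0\<^sub>v (dim_row A)"
    using col_basis_null_space_mult_vec[OF Z dim u] unfolding w by blast
  then have "A *\<^sub>v w = B *\<^sub>v (- y)"
    using dim w mult_mat_vec_uminus[of y B] by (auto intro: eq_uminus_if_add_eq_zero_vec)
  then show "w \<in> {w \<in> carrier_vec (dim_col A). A *\<^sub>v w \<in> mat_range B}"
    using mat_rangeI[of "- y" B] y upper_block_mult_vec_carrier unfolding w by simp
next
  fix w assume "w \<in> {w \<in> carrier_vec (dim_col A). A *\<^sub>v w \<in> mat_range B}"
  then obtain w' where w: "w \<in> carrier_vec (dim_col A)" and w': "w' \<in> carrier_vec (dim_col B)"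
    and eq: "A *\<^sub>v w = B *\<^sub>v w'"
    unfolding mat_range_image by auto
  have "hcat A B *\<^sub>v (w @\<^sub>v - w') = A *\<^sub>v w + - (B *\<^sub>v w')"
    using hcat_mult_append[OF dim w] w' by (simp add: mult_mat_vec_uminus)
  also have "\<dots> = 0\<^sub>v (dim_row A)"
    unfolding eq using dim by (intro uminus_r_inv_vec carrier_vecI) simp
  finally have "w @\<^sub>v - w' \<in> mat_range Z"
    using Z w w' unfolding col_basis_def null_space_pair_def by simp
  then obtain u where u: "u \<in> carrier_vec (dim_col Z)" and "Z *\<^sub>v u = w @\<^sub>v - w'"
    unfolding mat_range_image by auto
  then have "upper_block A Z *\<^sub>v u = w"
    using col_basis_null_space_dim_row[OF Z] w by (simp add: upper_block_mult_vec vec_first_append)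
  then show "w \<in> mat_range (upper_block A Z)"
    using mat_rangeI[of u "upper_block A Z"] u by simp
qed

lemma full_column_rank_upper_block:
  assumes Z: "col_basis Z (null_space_pair A B)" and dim: "dim_row B = dim_row A"
    and B: "full_column_rank B"
  shows "full_column_rank (upper_block A Z)"
  unfolding full_column_rank_def
proof (intro ballI impI)
  fix u assume u: "u \<in> carrier_vec (dim_col (upper_block A Z))"
    and "upper_block A Z *\<^sub>v u = 0\<^sub>v (dim_row (upper_block A Z))"
  then have Uu: "upper_block A Z *\<^sub>v u = 0\<^sub>v (dim_col A)"
    by simp
  from u have "u \<in> carrier_vec (dim_col Z)"
    by simp
  then obtain y where y: "y \<in> carrier_vec (dim_col B)"
    and split: "Z *\<^sub>v u = (upper_block A Z *\<^sub>v u) @\<^sub>v y"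
    and "A *\<^sub>v (upper_block A Z *\<^sub>v u) + B *\<^sub>v y = 0\<^sub>v (dim_row A)"
    by (rule col_basis_null_space_mult_vec[OF Z dim])
  moreover have "B *\<^sub>v y \<in> carrier_vec (dim_row A)"
    using dim by (intro carrier_vecI) simp
  ultimately have "B *\<^sub>v y = 0\<^sub>v (dim_row B)"
    using dim unfolding Uu by (simp add: mult_mat_vec_zero)
  then have "y = 0\<^sub>v (dim_col B)"
    by (rule full_column_rankD[OF B y])
  then have "Z *\<^sub>v u = 0\<^sub>v (dim_row Z)"
    unfolding split Uu col_basis_null_space_dim_row[OF Z] by (intro eq_vecI) auto
  then show "u = 0\<^sub>v (dim_col (upper_block A Z))"
    using Z u full_column_rankD[of Z u] unfolding col_basis_def by simp
qed

subsection \<open>The subspace computed by SSD\<close>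

lemma ssd_from_dim_row: "ssd_from A B C out \<Longrightarrow> dim_row out = dim_row C"
  by (induction rule: ssd_from.induct) auto

lemma invariant_subset_mat_range_upper_block:
  assumes Z: "col_basis Z (null_space_pair A B)"
    and dim: "dim_row B = dim_row A" "dim_col B = dim_col A"
    and W: "W \<subseteq> carrier_vec (dim_col A)" and inv: "(*\<^sub>v) A ` W \<subseteq> (*\<^sub>v) B ` W"
  shows "W \<subseteq> mat_range (upper_block A Z)"
proof
  fix w assume w: "w \<in> W"
  then obtain w' where "w' \<in> W" "A *\<^sub>v w = B *\<^sub>v w'"
    using inv by blast
  then have "A *\<^sub>v w \<in> mat_range B"
    using W dim(2) mat_rangeI[of w' B] by auto
  then show "w \<in> mat_range (upper_block A Z)"
    unfolding mat_range_upper_block[OF Z dim(1)] using W w by auto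
qed

lemma ssd_from_range_maximal:
  assumes "ssd_from A B C out"
    and "dim_row B = dim_row A" "dim_col B = dim_col A" "dim_col C = dim_col A"
    and "W \<subseteq> carrier_vec (dim_col A)" "(*\<^sub>v) A ` W \<subseteq> (*\<^sub>v) B ` W"
  shows "(*\<^sub>v) C ` W \<subseteq> mat_range out"
  using assms
proof (induction arbitrary: W rule: ssd_from.induct)
  case (ssd_trivial Z A B C)
  then have "W \<subseteq> {0\<^sub>v (dim_col A)}"
    using invariant_subset_mat_range_upper_block[of Z A B W]
      mat_range_dim_col_0[of "upper_block A Z"]
    by simp
  then show ?case
    using ssd_trivial.prems(3) mat_range_dim_col_0[of "0\<^sub>m (dim_row C) 0"] mult_mat_vec_zero[of C]
    by auto
next
  case (ssd_stop Z A B C)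
  then show ?case
    unfolding mat_range_image by auto
next
  case (ssd_step Z A B C out)
  let ?U = "upper_block A Z"
  define W' where "W' = {u \<in> carrier_vec (dim_col ?U). ?U *\<^sub>v u \<in> W}"
  have U_carrier: "?U \<in> carrier_mat (dim_col A) (dim_col Z)"
    by (rule carrier_matI) simp_all
  have W': "W' \<subseteq> carrier_vec (dim_col Z)"
    unfolding W'_def by auto
  have "W \<subseteq> mat_range ?U"
    using invariant_subset_mat_range_upper_block ssd_step by blast
  then have image_W': "(*\<^sub>v) ?U ` W' = W"
    unfolding W'_def by (rule image_preimage_mat_range)
  have A: "A \<in> carrier_mat (dim_row A) (dim_col A)" and B: "B \<in> carrier_mat (dim_row B) (dim_col A)"
    and C: "C \<in> carrier_mat (dim_row C) (dim_col A)"
    using ssd_step.prems by (auto intro: carrier_matI)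
  have "(*\<^sub>v) (A * ?U) ` W' \<subseteq> (*\<^sub>v) (B * ?U) ` W'"
    using ssd_step.prems(5)
    unfolding image_mult_mat_vec_assoc[OF A U_carrier W']
      image_mult_mat_vec_assoc[OF B U_carrier W'] image_W' .
  then have "(*\<^sub>v) (C * ?U) ` W' \<subseteq> mat_range out"
    using ssd_step.prems(1-3) W' by (intro ssd_step.IH) simp_all
  then show ?case
    unfolding image_mult_mat_vec_assoc[OF C U_carrier W'] image_W' .
qed

lemma ssd_from_range_invariant:
  assumes "ssd_from A B C out"
    and "A = A0 * C" "B = B0 * C"
    and "A0 \<in> carrier_mat n m" "B0 \<in> carrier_mat n m" "C \<in> carrier_mat m (dim_col C)"
    and "full_column_rank B"
  shows "(*\<^sub>v) A0 ` mat_range out \<subseteq> (*\<^sub>v) B0 ` mat_range out"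
  using assms
proof (induction rule: ssd_from.induct)
  case (ssd_trivial Z A B C)
  then have "mat_range (0\<^sub>m (dim_row C) 0) = {0\<^sub>v m}"
    using mat_range_dim_col_0[of "0\<^sub>m (dim_row C) 0"] by simp
  moreover have "A0 *\<^sub>v 0\<^sub>v m = B0 *\<^sub>v 0\<^sub>v m"
    using ssd_trivial.prems(3,4) mult_mat_vec_zero[of A0] mult_mat_vec_zero[of B0] by simp
  ultimately show ?case
    by simp
next
  case (ssd_stop Z A B C)
  have dim: "dim_row B = dim_row A" "dim_col A = dim_col C" "dim_col B = dim_col C"
    unfolding ssd_stop.prems(1,2) using ssd_stop.prems(3,4) by auto
  have U_range: "mat_range (upper_block A Z) = carrier_vec (dim_col A)"
    using full_column_rank_mat_range_carrier[OF full_column_rank_upper_block[OF ssd_stop(1) dim(1)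
        ssd_stop.prems(6)]] ssd_stop(3) by simp
  have A_into_B: "A *\<^sub>v x \<in> mat_range B" if "x \<in> carrier_vec (dim_col C)" for x
  proof -
    have "x \<in> mat_range (upper_block A Z)"
      using that dim(2) U_range by simp
    then show ?thesis
      unfolding mat_range_upper_block[OF ssd_stop(1) dim(1)] by simp
  qed
  show ?case
  proof (rule image_subsetI)
    fix s assume "s \<in> mat_range C"
    then obtain x where x: "x \<in> carrier_vec (dim_col C)" and s: "s = C *\<^sub>v x"
      unfolding mat_range_image by auto
    obtain y where y: "y \<in> carrier_vec (dim_col C)" and "A *\<^sub>v x = B *\<^sub>v y"
      using A_into_B[OF x] dim(3) unfolding mat_range_image by auto
    then have "A0 *\<^sub>v s = B0 *\<^sub>v (C *\<^sub>v y)"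
      unfolding s ssd_stop.prems(1,2)
      using assoc_mult_mat_vec[OF ssd_stop.prems(3,5) x]
        assoc_mult_mat_vec[OF ssd_stop.prems(4,5) y]
      by simp
    then show "A0 *\<^sub>v s \<in> (*\<^sub>v) B0 ` mat_range C"
      using mat_rangeI[OF y] by blast
  qed
next
  case (ssd_step Z A B C out)
  let ?U = "upper_block A Z"
  have dim: "dim_row B = dim_row A" "dim_col A = dim_col C" "dim_col B = dim_col C"
    unfolding ssd_step.prems(1,2) using ssd_step.prems(3,4) by auto
  have U_carrier: "?U \<in> carrier_mat (dim_col C) (dim_col Z)"
    using dim by (intro carrier_matI) simp_all
  show ?case
  proof (rule ssd_step.IH)
    show "A * ?U = A0 * (C * ?U)"
      using assoc_mult_mat[OF ssd_step.prems(3,5) U_carrier]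
      by (simp only: ssd_step.prems(1)[symmetric])
    show "B * ?U = B0 * (C * ?U)"
      using assoc_mult_mat[OF ssd_step.prems(4,5) U_carrier]
      by (simp only: ssd_step.prems(2)[symmetric])
    show "full_column_rank (B * ?U)"
      using dim by (intro full_column_rank_mult[OF ssd_step.prems(6)]
          full_column_rank_upper_block[OF ssd_step(1) dim(1) ssd_step.prems(6)]) simp
    show "C * ?U \<in> carrier_mat m (dim_col (C * ?U))"
      using ssd_step.prems(5) by (intro carrier_matI) simp_all
  qed (rule ssd_step.prems)+
qed

lemma is_SSD_range_invariant:
  assumes "A \<in> carrier_mat n m" "B \<in> carrier_mat n m" "full_column_rank B" "is_SSD A B out"
  shows "(*\<^sub>v) A ` mat_range out \<subseteq> (*\<^sub>v) B ` mat_range out"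
  using ssd_from_range_invariant[of A B "1\<^sub>m m" out A B n m] assms unfolding is_SSD_def by simp

lemma is_SSD_mult_range_maximal:
  assumes A: "A \<in> carrier_mat n m" and B: "B \<in> carrier_mat n m" and D: "D \<in> carrier_mat m k"
    and ssd: "is_SSD (A * D) (B * D) E"
    and S_D: "S \<subseteq> mat_range D" and inv: "(*\<^sub>v) A ` S \<subseteq> (*\<^sub>v) B ` S"
  shows "S \<subseteq> mat_range (D * E)"
proof -
  define W where "W = {u \<in> carrier_vec (dim_col D). D *\<^sub>v u \<in> S}"
  have W: "W \<subseteq> carrier_vec k"
    unfolding W_def using D by auto
  have image_W: "(*\<^sub>v) D ` W = S"
    unfolding W_def by (rule image_preimage_mat_range[OF S_D])
  have ssd_from: "ssd_from (A * D) (B * D) (1\<^sub>m k) E"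
    using ssd D unfolding is_SSD_def by simp
  have "(*\<^sub>v) (A * D) ` W \<subseteq> (*\<^sub>v) (B * D) ` W"
    unfolding image_mult_mat_vec_assoc[OF A D W] image_mult_mat_vec_assoc[OF B D W] image_W
    by (rule inv)
  then have "(*\<^sub>v) (1\<^sub>m k) ` W \<subseteq> mat_range E"
    using ssd_from_range_maximal[OF ssd_from] A B D W by simp
  moreover have "(*\<^sub>v) (1\<^sub>m k) ` W = id ` W"
    using W by (intro image_cong) auto
  ultimately have "W \<subseteq> mat_range E"
    by simp
  moreover have "E \<in> carrier_mat k (dim_col E)"
    using ssd_from_dim_row[OF ssd_from] by (intro carrier_matI) simp_all
  ultimately show ?thesis
    using image_W mat_range_mult[OF D] image_mono by metis
qed

subsection \<open>Executions of P-SSD\<close>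

lemma pssd_exec_Suc:
  assumes "pssd_exec M Nd DXl DYl E C" "i < M"
  obtains Dk Ek where "dim_row Dk = Nd"
    and "col_basis Dk (\<Inter>j \<in> insert i {j. (j, i) \<in> E (Suc k)}. mat_range (C k j))"
    and "is_SSD (DXl i * Dk) (DYl i * Dk) Ek"
    and "C (Suc k) i = (if dim_col (Dk * Ek) < dim_col (C k i) then Dk * Ek else C k i)"
proof -
  have "\<forall>k i. 1 \<le> k \<and> i < M \<longrightarrow> (\<exists>Dk Ek. dim_row Dk = Nd \<and>
           col_basis Dk (\<Inter>j \<in> insert i {j. (j, i) \<in> E k}. mat_range (C (k - 1) j)) \<and>
           is_SSD (DXl i * Dk) (DYl i * Dk) Ek \<and>
           C k i = (if dim_col (Dk * Ek) < dim_col (C (k - 1) i) then Dk * Ek else C (k - 1) i))"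
    using assms(1) unfolding pssd_exec_def by (rule conjunct2)
  from this[rule_format, of "Suc k" i] assms(2) that show thesis
    by auto
qed

lemma pssd_exec_invariant_subset_mat_range:
  assumes exec: "pssd_exec M Nd DXl DYl E C"
    and graphs: "\<And>k. E k \<subseteq> {..<M} \<times> {..<M}"
    and local_dim: "\<And>i. i < M \<Longrightarrow> DXl i \<in> carrier_mat (dim_row (DXl i)) Nd \<and>
                                     DYl i \<in> carrier_mat (dim_row (DXl i)) Nd"
    and S: "S \<subseteq> carrier_vec Nd"
    and inv: "\<And>i. i < M \<Longrightarrow> (*\<^sub>v) (DXl i) ` S \<subseteq> (*\<^sub>v) (DYl i) ` S"
    and "i < M"
  shows "S \<subseteq> mat_range (C k i)"
  using \<open>i < M\<close>
proof (induction k arbitrary: i)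
  case 0
  then show ?case
    using exec S unfolding pssd_exec_def by simp
next
  case (Suc k)
  obtain Dk Ek where D: "dim_row Dk = Nd"
    and basis: "col_basis Dk (\<Inter>j \<in> insert i {j. (j, i) \<in> E (Suc k)}. mat_range (C k j))"
    and ssd: "is_SSD (DXl i * Dk) (DYl i * Dk) Ek"
    and step: "C (Suc k) i = (if dim_col (Dk * Ek) < dim_col (C k i) then Dk * Ek else C k i)"
    by (rule pssd_exec_Suc[OF exec Suc.prems])
  have "S \<subseteq> mat_range (C k j)" if "j \<in> insert i {j. (j, i) \<in> E (Suc k)}" for j
    using Suc.IH that graphs[of "Suc k"] Suc.prems by blast
  then have "S \<subseteq> mat_range Dk"
    using basis unfolding col_basis_def by blast
  moreover have "Dk \<in> carrier_mat Nd (dim_col Dk)"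
    using D by (intro carrier_matI) simp_all
  ultimately have "S \<subseteq> mat_range (Dk * Ek)"
    using local_dim[OF Suc.prems] is_SSD_mult_range_maximal ssd inv[OF Suc.prems] by blast
  then show ?case
    using Suc.IH[OF Suc.prems] unfolding step by simp
qed

theorem proposition4p8:
  fixes M Nd :: nat
    and DX DY DXs DYs :: "real mat"
    and DXl DYl :: "nat \<Rightarrow> real mat"
    and E :: "nat \<Rightarrow> (nat \<times> nat) set"
    and C :: "nat \<Rightarrow> nat \<Rightarrow> real mat"
    and C_SSD :: "real mat"
  assumes DX_dim: "DX \<in> carrier_mat (dim_row DX) Nd" and DY_dim: "DY \<in> carrier_mat (dim_row DX) Nd"
    and full_rank: "full_column_rank DX" "full_column_rank DY"
    and local_dim: "\<And>i. i < M \<Longrightarrow> DXl i \<in> carrier_mat (dim_row (DXl i)) Nd \<and>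
                                     DYl i \<in> carrier_mat (dim_row (DXl i)) Nd"
    and cover: "(\<Union>i \<in> {..<M}. row_set (hcat (DXl i) (DYl i))) = row_set (hcat DX DY)"
    and sig_dim: "DXs \<in> carrier_mat (dim_row DXs) Nd" "DYs \<in> carrier_mat (dim_row DXs) Nd"
    and sig_rank: "full_column_rank DXs" "full_column_rank DYs"
    and sig_rows: "\<And>i. i < M \<Longrightarrow> row_set (hcat DXs DYs) \<subseteq> row_set (hcat (DXl i) (DYl i))"
    and graphs: "\<And>k. E k \<subseteq> {..<M} \<times> {..<M}"
    and ssd: "is_SSD DX DY C_SSD"
    and exec: "pssd_exec M Nd DXl DYl E C"
  shows "\<forall>k i. i < M \<longrightarrow> mat_range C_SSD \<subseteq> mat_range (C k i)"
proof (intro allI impI)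
  let ?S = "mat_range C_SSD"
  have S_carrier: "?S \<subseteq> carrier_vec Nd"
    using mat_range_carrier[of C_SSD] ssd_from_dim_row[of DX DY _ C_SSD] ssd DX_dim
    unfolding is_SSD_def by simp
  have global_inv: "(*\<^sub>v) DX ` ?S \<subseteq> (*\<^sub>v) DY ` ?S"
    by (rule is_SSD_range_invariant[OF DX_dim DY_dim full_rank(2) ssd])
  have local_inv: "(*\<^sub>v) (DXl i) ` ?S \<subseteq> (*\<^sub>v) (DYl i) ` ?S" if "i < M" for i
  proof (rule image_subset_if_row_set_hcat_subset[OF _ DX_dim DY_dim _ _ S_carrier global_inv,
        where n' = "dim_row (DXl i)"])
    show "row_set (hcat (DXl i) (DYl i)) \<subseteq> row_set (hcat DX DY)"
      using cover that by blast
  qed (use local_dim[OF that] in simp_all)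
  fix k i assume "i < M"
  show "?S \<subseteq> mat_range (C k i)"
    by (rule pssd_exec_invariant_subset_mat_range[OF exec graphs _ S_carrier _ \<open>i < M\<close>])
      (fact local_dim, fact local_inv)
qed

end
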